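(* For every $m\in\mathbb{N}$, $\mathscr{G}^{(m)}\setminus\mathscr{G}^{(m-1)}\neq\emptyset$. In particular, if $K_{m+1}$ denotes the complete graph on $m+1$ vertices, then $K_{m+1}\in\mathscr{G}^{(m)}\setminus\mathscr{G}^{(m-1)}$.
   Context: All graphs are finite simplicial graphs (undirected, no loops, at most one edge between two vertices). Pinning: for graphs $\Gamma,\Gamma'$ and $v\in V\Gamma$, the graph $\Phi_{(\Gamma,v)}(\Gamma')$ has vertex set $V\Gamma\sqcup V\Gamma'$ and edge set $E\Gamma\sqcup E\Gamma'\sqcup\{(w,v):w\in V\Gamma'\}$ ("pinning $\Gamma'$ to $\Gamma$ at $v$"). Let $\mathscr{G}^{(0)}$ consist of the single-vertex graph. Recursively, $\mathscr{G}^{(m+1)}$ is the class of graphs obtained by repeatedly appending a graph from $\mathscr{G}^{(m)}$ to the graph built so far, each time either (1) leaving the appended graph disjoint (no edges to the previous graph), or (2) pinning the appended graph to the previous graph at some vertex. Thus $\mathscr{G}^{(1)}$ consists of graphs built by successively adding a vertex that is either isolated or adjacent to exactly one existing vertex. *)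

theory Defs
  imports Main
begin

text \<open>A finite simple graph is represented with vertex set {0..<n} and a set of
ordered pairs as (symmetric, irreflexive) edge relation.\<close>

type_synonym graph = "nat \<times> (nat \<times> nat) set"

definition wf_graph :: "graph \<Rightarrow> bool" where
  "wf_graph G \<longleftrightarrow> (\<forall>(a,b)\<in>snd G. a < fst G \<and> b < fst G \<and> a \<noteq> b \<and> (b,a) \<in> snd G)"

definition graph_iso :: "graph \<Rightarrow> graph \<Rightarrow> bool" where
  "graph_iso G H \<longleftrightarrow> (\<exists>f. bij_betw f {0..<fst G} {0..<fst H} \<and>
     (\<forall>a<fst G. \<forall>b<fst G. (a,b) \<in> snd G \<longleftrightarrow> (f a, f b) \<in> snd H))"

definition single_vertex :: graph where
  "single_vertex = (1, {})"

definition disj_union :: "graph \<Rightarrow> graph \<Rightarrow> graph" where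
  "disj_union G H = (fst G + fst H, snd G \<union> {(a + fst G, b + fst G) | a b. (a,b) \<in> snd H})"

definition pin :: "graph \<Rightarrow> nat \<Rightarrow> graph \<Rightarrow> graph" where
  "pin G v H = (fst G + fst H, snd G \<union> {(a + fst G, b + fst G) | a b. (a,b) \<in> snd H}
       \<union> {(v, w + fst G) | w. w < fst H} \<union> {(w + fst G, v) | w. w < fst H})"

inductive_set built :: "graph set \<Rightarrow> graph set" for S where
  start: "H \<in> S \<Longrightarrow> H \<in> built S"
| disj: "G \<in> built S \<Longrightarrow> H \<in> S \<Longrightarrow> disj_union G H \<in> built S"
| pinned: "G \<in> built S \<Longrightarrow> H \<in> S \<Longrightarrow> v < fst G \<Longrightarrow> pin G v H \<in> built S"

fun Gcls :: "nat \<Rightarrow> graph set" where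
  "Gcls 0 = {G. wf_graph G \<and> graph_iso G single_vertex}"
| "Gcls (Suc m) = {G. wf_graph G \<and> (\<exists>H\<in>built (Gcls m). graph_iso G H)}"

text \<open>G^(m-1), with the convention G^(-1) = empty.\<close>
definition Gprev :: "nat \<Rightarrow> graph set" where
  "Gprev m = (if m = 0 then {} else Gcls (m - 1))"

definition complete_graph :: "nat \<Rightarrow> graph" where
  "complete_graph n = (n, {(a,b). a < n \<and> b < n \<and> a \<noteq> b})"

end

theory Submission
  imports Defs
begin

text \<open>Every graph in \<open>Gcls m\<close> has clique number at most \<open>m + 1\<close>. Indeed, appending a graph of
clique number at most \<open>k\<close> to one of clique number at most \<open>k + 1\<close> creates no larger clique: a
clique meeting the appended part meets the old part at most in the pinning vertex. Conversely,
the complete graph on \<open>m + 1\<close> vertices arises by pinning the one on \<open>m\<close> vertices to a single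
vertex, so it lies in \<open>Gcls m\<close>, and its clique number \<open>m + 1\<close> keeps it out of \<open>Gcls (m - 1)\<close>.\<close>

definition is_clique :: "graph \<Rightarrow> nat set \<Rightarrow> bool" where
  "is_clique G C \<longleftrightarrow> C \<subseteq> {0..<fst G} \<and> (\<forall>a\<in>C. \<forall>b\<in>C. a \<noteq> b \<longrightarrow> (a, b) \<in> snd G)"

definition clique_bounded :: "nat \<Rightarrow> graph \<Rightarrow> bool" where
  "clique_bounded k G \<longleftrightarrow> (\<forall>C. is_clique G C \<longrightarrow> card C \<le> k)"

lemma clique_bounded_mono: "k \<le> l \<Longrightarrow> clique_bounded k G \<Longrightarrow> clique_bounded l G"
  unfolding clique_bounded_def by (meson le_trans)

lemma clique_bounded_order: "clique_bounded (fst G) G"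
  unfolding clique_bounded_def is_clique_def
  by (metis card_atLeastLessThan card_mono diff_zero finite_atLeastLessThan)

lemma complete_graph_not_clique_bounded: "\<not> clique_bounded n (complete_graph (Suc n))"
proof
  assume "clique_bounded n (complete_graph (Suc n))"
  moreover have "is_clique (complete_graph (Suc n)) {0..<Suc n}"
    by (simp add: is_clique_def complete_graph_def)
  ultimately show False
    unfolding clique_bounded_def by fastforce
qed

lemma graph_iso_refl: "graph_iso G G"
  unfolding graph_iso_def by (rule exI[of _ id]) auto

lemma clique_bounded_graph_iso:
  assumes "graph_iso G H" and bounded: "clique_bounded k H"
  shows "clique_bounded k G"
  unfolding clique_bounded_def
proof (intro allI impI)
  obtain f where bij: "bij_betw f {0..<fst G} {0..<fst H}"
    and edges: "\<forall>a<fst G. \<forall>b<fst G. (a, b) \<in> snd G \<longleftrightarrow> (f a, f b) \<in> snd H"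
    using assms(1) unfolding graph_iso_def by blast
  fix C assume C: "is_clique G C"
  then have sub: "C \<subseteq> {0..<fst G}"
    unfolding is_clique_def by blast
  have "is_clique H (f ` C)"
    unfolding is_clique_def
  proof (intro conjI ballI impI)
    show "f ` C \<subseteq> {0..<fst H}"
      using bij sub by (metis bij_betw_def image_mono)
  next
    fix x y assume "x \<in> f ` C" "y \<in> f ` C" "x \<noteq> y"
    then obtain a b where ab: "a \<in> C" "b \<in> C" "x = f a" "y = f b" "a \<noteq> b"
      by blast
    then have "(a, b) \<in> snd G"
      using C unfolding is_clique_def by blast
    moreover have "a < fst G" "b < fst G"
      using sub ab by auto
    ultimately show "(x, y) \<in> snd H"
      using edges ab by blast
  qed
  then have "card (f ` C) \<le> k"
    using bounded unfolding clique_bounded_def by blast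
  moreover have "inj_on f C"
    using bij sub by (meson bij_betw_def inj_on_subset)
  ultimately show "card C \<le> k"
    by (simp add: card_image)
qed

definition glued_at :: "graph \<Rightarrow> nat \<Rightarrow> graph \<Rightarrow> graph \<Rightarrow> bool" where
  "glued_at G v H J \<longleftrightarrow> fst J = fst G + fst H
     \<and> (\<forall>a<fst G. \<forall>b<fst G. (a, b) \<in> snd J \<longrightarrow> (a, b) \<in> snd G)
     \<and> (\<forall>a b. (a + fst G, b + fst G) \<in> snd J \<longrightarrow> (a, b) \<in> snd H)
     \<and> (\<forall>a<fst G. \<forall>b. (a, b + fst G) \<in> snd J \<longrightarrow> a = v)"

lemma wf_graph_edgeD:
  "wf_graph G \<Longrightarrow> (a, b) \<in> snd G \<Longrightarrow> a < fst G \<and> b < fst G \<and> a \<noteq> b \<and> (b, a) \<in> snd G"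
  unfolding wf_graph_def by blast

lemma glued_at_disj_union: "wf_graph G \<Longrightarrow> glued_at G v H (disj_union G H)"
  unfolding glued_at_def disj_union_def by (auto dest: wf_graph_edgeD)

lemma glued_at_pin: "wf_graph G \<Longrightarrow> v < fst G \<Longrightarrow> glued_at G v H (pin G v H)"
  unfolding glued_at_def pin_def by (auto dest: wf_graph_edgeD)

lemma wf_graph_disj_union: "wf_graph G \<Longrightarrow> wf_graph H \<Longrightarrow> wf_graph (disj_union G H)"
  unfolding wf_graph_def disj_union_def by fastforce

lemma wf_graph_pin: "wf_graph G \<Longrightarrow> wf_graph H \<Longrightarrow> v < fst G \<Longrightarrow> wf_graph (pin G v H)"
  unfolding wf_graph_def pin_def by fastforce

lemma is_clique_glued_at_low:
  "glued_at G v H J \<Longrightarrow> is_clique J C \<Longrightarrow> is_clique G (C \<inter> {..<fst G})"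
  unfolding glued_at_def is_clique_def by auto

lemma is_clique_glued_at_high:
  assumes glued: "glued_at G v H J" and C: "is_clique J C"
  shows "is_clique H ((\<lambda>x. x - fst G) ` (C - {..<fst G}))"
  unfolding is_clique_def
proof (intro conjI subsetI ballI impI)
  have order: "fst J = fst G + fst H"
    using glued unfolding glued_at_def by blast
  fix x assume "x \<in> (\<lambda>x. x - fst G) ` (C - {..<fst G})"
  then obtain a where "a \<in> C" "\<not> a < fst G" "x = a - fst G"
    by blast
  moreover have "a < fst J"
    using C \<open>a \<in> C\<close> unfolding is_clique_def by auto
  ultimately show "x \<in> {0..<fst H}"
    using order by simp
next
  have high_edges: "\<And>a b. (a + fst G, b + fst G) \<in> snd J \<Longrightarrow> (a, b) \<in> snd H"
    using glued unfolding glued_at_def by blast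
  fix x y
  assume "x \<in> (\<lambda>x. x - fst G) ` (C - {..<fst G})" "y \<in> (\<lambda>x. x - fst G) ` (C - {..<fst G})"
    and "x \<noteq> y"
  then obtain a b where a: "a \<in> C" "\<not> a < fst G" "x = a - fst G"
    and b: "b \<in> C" "\<not> b < fst G" "y = b - fst G"
    by blast
  then have "a \<noteq> b"
    using \<open>x \<noteq> y\<close> by blast
  then have "(a, b) \<in> snd J"
    using C a(1) b(1) unfolding is_clique_def by blast
  moreover have "a = x + fst G" "b = y + fst G"
    using a b by simp_all
  ultimately show "(x, y) \<in> snd H"
    using high_edges by simp
qed

lemma clique_bounded_glued_at:
  assumes glued: "glued_at G v H J"
    and G: "clique_bounded (Suc k) G" and H: "clique_bounded k H"
  shows "clique_bounded (Suc k) J"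
  unfolding clique_bounded_def
proof (intro allI impI)
  fix C assume C: "is_clique J C"
  define low where "low = C \<inter> {..<fst G}"
  define high where "high = C - {..<fst G}"
  have "finite C"
    using C unfolding is_clique_def by (meson finite_atLeastLessThan finite_subset)
  moreover have "C = low \<union> high" "low \<inter> high = {}"
    unfolding low_def high_def by blast+
  ultimately have card_C: "card C = card low + card high"
    by (metis card_Un_disjoint finite_Un)
  have card_low: "card low \<le> Suc k"
    using G is_clique_glued_at_low[OF glued C] unfolding clique_bounded_def low_def by blast
  have "inj_on (\<lambda>x. x - fst G) high"
    unfolding high_def inj_on_def by auto
  then have "card high = card ((\<lambda>x. x - fst G) ` high)"
    by (simp add: card_image)
  also have "\<dots> \<le> k"
    using H is_clique_glued_at_high[OF glued C] unfolding clique_bounded_def high_def by blast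
  finally have card_high: "card high \<le> k" .
  show "card C \<le> Suc k"
  proof (cases "high = {}")
    case True
    then show ?thesis using card_C card_low by simp
  next
    case False
    then obtain b where "b \<in> high" by blast
    then have b: "b \<in> C" "fst G \<le> b"
      unfolding high_def by auto
    have cross_edges: "\<And>a c. a < fst G \<Longrightarrow> (a, c + fst G) \<in> snd J \<Longrightarrow> a = v"
      using glued unfolding glued_at_def by blast
    have "low \<subseteq> {v}"
    proof
      fix a assume a: "a \<in> low"
      then have "a < fst G" "a \<in> C"
        unfolding low_def by auto
      moreover from this have "(a, (b - fst G) + fst G) \<in> snd J"
        using C b unfolding is_clique_def by auto
      ultimately show "a \<in> {v}"
        using cross_edges by blast
    qed
    then have "card low \<le> card {v}"
      by (intro card_mono) simp_all
    then show ?thesis using card_C card_high by simp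
  qed
qed

lemma built_wf_graph:
  assumes "\<And>H. H \<in> S \<Longrightarrow> wf_graph H" and "G \<in> built S"
  shows "wf_graph G"
  using assms(2)
  by (induction G rule: built.induct) (blast intro: assms(1) wf_graph_disj_union wf_graph_pin)+

lemma built_clique_bounded:
  assumes wf: "\<And>H. H \<in> S \<Longrightarrow> wf_graph H"
    and bounded: "\<And>H. H \<in> S \<Longrightarrow> clique_bounded k H"
    and "G \<in> built S"
  shows "clique_bounded (Suc k) G"
  using \<open>G \<in> built S\<close>
proof (induction G rule: built.induct)
  case (start H)
  then show ?case using bounded clique_bounded_mono le_SucI by blast
next
  case (disj G H)
  then show ?case
    using bounded clique_bounded_glued_at glued_at_disj_union built_wf_graph wf by blast
next
  case (pinned G H v)
  then show ?case
    using bounded clique_bounded_glued_at glued_at_pin built_wf_graph wf by blast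
qed

lemma Gcls_wf_graph: "G \<in> Gcls m \<Longrightarrow> wf_graph G"
  by (cases m) auto

lemma Gcls_clique_bounded: "G \<in> Gcls m \<Longrightarrow> clique_bounded (Suc m) G"
proof (induction m arbitrary: G)
  case 0
  then have "graph_iso G single_vertex"
    by simp
  moreover have "clique_bounded (Suc 0) single_vertex"
    using clique_bounded_order[of single_vertex] by (simp add: single_vertex_def)
  ultimately show ?case
    by (rule clique_bounded_graph_iso)
next
  case (Suc m)
  then obtain H where H: "H \<in> built (Gcls m)" and iso: "graph_iso G H"
    by auto
  have "clique_bounded (Suc (Suc m)) H"
    using built_clique_bounded[OF Gcls_wf_graph Suc.IH H] .
  with iso show ?case
    by (rule clique_bounded_graph_iso)
qed

lemma single_vertex_in_Gcls: "single_vertex \<in> Gcls m"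
proof -
  have "wf_graph single_vertex" by (simp add: wf_graph_def single_vertex_def)
  then show ?thesis
    by (induction m) (auto intro: built.start graph_iso_refl)
qed

lemma pin_single_vertex_complete_graph:
  "pin single_vertex 0 (complete_graph n) = complete_graph (Suc n)"
proof -
  have "(a, b) \<in> snd (pin single_vertex 0 (complete_graph n))
          \<longleftrightarrow> (a, b) \<in> snd (complete_graph (Suc n))" for a b
    unfolding pin_def single_vertex_def complete_graph_def
    by (cases a; cases b) auto
  then show ?thesis
    by (simp add: pin_def single_vertex_def complete_graph_def prod_eq_iff set_eq_iff)
qed

lemma complete_graph_in_Gcls: "complete_graph (Suc m) \<in> Gcls m"
proof (induction m)
  case 0
  have "complete_graph 1 = single_vertex"
    by (auto simp: complete_graph_def single_vertex_def)
  then show ?case using single_vertex_in_Gcls by (metis One_nat_def)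
next
  case (Suc m)
  have "pin single_vertex 0 (complete_graph (Suc m)) \<in> built (Gcls m)"
    using Suc built.pinned[OF built.start[OF single_vertex_in_Gcls]]
    by (simp add: single_vertex_def)
  moreover have "wf_graph (complete_graph (Suc (Suc m)))"
    by (auto simp: wf_graph_def complete_graph_def)
  ultimately show ?case
    by (auto simp: pin_single_vertex_complete_graph intro: graph_iso_refl)
qed

theorem proposition2p7:
  fixes m :: nat
  shows "Gcls m - Gprev m \<noteq> {} \<and> complete_graph (m + 1) \<in> Gcls m - Gprev m"
proof -
  have "complete_graph (Suc m) \<notin> Gprev m"
  proof (cases m)
    case (Suc j)
    then show ?thesis
      using Gcls_clique_bounded[of "complete_graph (Suc m)" j] complete_graph_not_clique_bounded
      by (auto simp: Gprev_def)
  qed (simp add: Gprev_def)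
  then show ?thesis using complete_graph_in_Gcls by auto
qed

end
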